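(* Let $G$ be a fullerene graph. Then $G$ has a perfect star packing if and only if $G$ has an independent vertex set $S^*$ such that each connected component of $G-S^*$ is a cycle which is an induced cycle of $G$.
   Context: A fullerene graph is a finite simple connected (equivalently, $3$-connected) plane cubic graph all of whose faces are pentagons or hexagons. A perfect star packing of a graph $G$ is a spanning subgraph of $G$ every connected component of which is isomorphic to the star $K_{1,3}$. A cycle $v_1\cdots v_k v_1$ in $G$ is induced if it has no chord, i.e. no edge $v_iv_j$ of $G$ with $v_i,v_j$ non-consecutive on the cycle. *)

theory Defs
  imports Main
begin

definition simple_graph :: "'a set \<Rightarrow> ('a \<Rightarrow> 'a \<Rightarrow> bool) \<Rightarrow> bool" where
  "simple_graph V E \<longleftrightarrow> finite V \<and> (\<forall>x y. E x y \<longrightarrow> x \<in> V \<and> y \<in> V)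
     \<and> (\<forall>x y. E x y \<longrightarrow> E y x) \<and> (\<forall>x. \<not> E x x)"

definition neighbours :: "'a set \<Rightarrow> ('a \<Rightarrow> 'a \<Rightarrow> bool) \<Rightarrow> 'a \<Rightarrow> 'a set" where
  "neighbours V E v = {w \<in> V. E v w}"

definition cubic :: "'a set \<Rightarrow> ('a \<Rightarrow> 'a \<Rightarrow> bool) \<Rightarrow> bool" where
  "cubic V E \<longleftrightarrow> (\<forall>v\<in>V. card (neighbours V E v) = 3)"

definition restr :: "'a set \<Rightarrow> ('a \<Rightarrow> 'a \<Rightarrow> bool) \<Rightarrow> 'a \<Rightarrow> 'a \<Rightarrow> bool" where
  "restr W E x y \<longleftrightarrow> x \<in> W \<and> y \<in> W \<and> E x y"

definition connected_graph :: "'a set \<Rightarrow> ('a \<Rightarrow> 'a \<Rightarrow> bool) \<Rightarrow> bool" where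
  "connected_graph V E \<longleftrightarrow> V \<noteq> {} \<and> (\<forall>x\<in>V. \<forall>y\<in>V. (restr V E)\<^sup>*\<^sup>* x y)"

definition component :: "'a set \<Rightarrow> ('a \<Rightarrow> 'a \<Rightarrow> bool) \<Rightarrow> 'a \<Rightarrow> 'a set" where
  "component V E v = {w \<in> V. (restr V E)\<^sup>*\<^sup>* v w}"

definition components :: "'a set \<Rightarrow> ('a \<Rightarrow> 'a \<Rightarrow> bool) \<Rightarrow> 'a set set" where
  "components V E = component V E ` V"

definition edge_set :: "'a set \<Rightarrow> ('a \<Rightarrow> 'a \<Rightarrow> bool) \<Rightarrow> 'a set set" where
  "edge_set V E = {{x, y} | x y. x \<in> V \<and> y \<in> V \<and> E x y}"

definition darts :: "'a set \<Rightarrow> ('a \<Rightarrow> 'a \<Rightarrow> bool) \<Rightarrow> ('a \<times> 'a) set" where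
  "darts V E = {(u, v). u \<in> V \<and> v \<in> V \<and> E u v}"

definition rotation_system :: "'a set \<Rightarrow> ('a \<Rightarrow> 'a \<Rightarrow> bool) \<Rightarrow> ('a \<times> 'a \<Rightarrow> 'a \<times> 'a) \<Rightarrow> bool" where
  "rotation_system V E rho \<longleftrightarrow> bij_betw rho (darts V E) (darts V E)
     \<and> (\<forall>d\<in>darts V E. fst (rho d) = fst d)
     \<and> (\<forall>d\<in>darts V E. \<forall>d'\<in>darts V E. fst d = fst d' \<longrightarrow> (\<exists>n. (rho ^^ n) d = d'))"

definition face_perm :: "('a \<times> 'a \<Rightarrow> 'a \<times> 'a) \<Rightarrow> 'a \<times> 'a \<Rightarrow> 'a \<times> 'a" where
  "face_perm rho d = rho (snd d, fst d)"

definition orbit_of :: "('b \<Rightarrow> 'b) \<Rightarrow> 'b \<Rightarrow> 'b set" where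
  "orbit_of f x = {(f ^^ n) x | n. True}"

text \<open>Faces of the embedding = orbits of the face permutation (given as dart sets);
the length of a face is the number of darts on its boundary walk.\<close>
definition faces :: "'a set \<Rightarrow> ('a \<Rightarrow> 'a \<Rightarrow> bool) \<Rightarrow> ('a \<times> 'a \<Rightarrow> 'a \<times> 'a) \<Rightarrow> ('a \<times> 'a) set set" where
  "faces V E rho = orbit_of (face_perm rho) ` darts V E"

text \<open>A rotation system describes an embedding in the sphere (a plane embedding) of a
connected graph iff Euler's formula V - E + F = 2 holds.\<close>
definition plane_rotation_system :: "'a set \<Rightarrow> ('a \<Rightarrow> 'a \<Rightarrow> bool) \<Rightarrow> ('a \<times> 'a \<Rightarrow> 'a \<times> 'a) \<Rightarrow> bool" where
  "plane_rotation_system V E rho \<longleftrightarrow> rotation_system V E rho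
     \<and> int (card V) - int (card (edge_set V E)) + int (card (faces V E rho)) = 2"

definition fullerene :: "'a set \<Rightarrow> ('a \<Rightarrow> 'a \<Rightarrow> bool) \<Rightarrow> bool" where
  "fullerene V E \<longleftrightarrow> simple_graph V E \<and> connected_graph V E \<and> cubic V E
     \<and> (\<exists>rho. plane_rotation_system V E rho
          \<and> (\<forall>f\<in>faces V E rho. card f = 5 \<or> card f = 6))"

definition is_K13 :: "'a set \<Rightarrow> ('a \<Rightarrow> 'a \<Rightarrow> bool) \<Rightarrow> bool" where
  "is_K13 C H \<longleftrightarrow> card C = 4 \<and>
     (\<exists>c\<in>C. \<forall>x\<in>C. \<forall>y\<in>C. H x y \<longleftrightarrow> (x = c \<and> y \<noteq> c) \<or> (y = c \<and> x \<noteq> c))"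

definition perfect_star_packing :: "'a set \<Rightarrow> ('a \<Rightarrow> 'a \<Rightarrow> bool) \<Rightarrow> bool" where
  "perfect_star_packing V E \<longleftrightarrow>
     (\<exists>H. (\<forall>x y. H x y \<longrightarrow> E x y) \<and> (\<forall>x y. H x y \<longrightarrow> H y x)
        \<and> (\<forall>C\<in>components V H. is_K13 C (restr C H)))"

definition cyc_adj :: "'a list \<Rightarrow> 'a \<Rightarrow> 'a \<Rightarrow> bool" where
  "cyc_adj vs x y \<longleftrightarrow> (\<exists>i<length vs. (x = vs ! i \<and> y = vs ! ((i + 1) mod length vs))
                                    \<or> (y = vs ! i \<and> x = vs ! ((i + 1) mod length vs)))"

definition is_cycle :: "('a \<Rightarrow> 'a \<Rightarrow> bool) \<Rightarrow> 'a list \<Rightarrow> bool" where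
  "is_cycle E vs \<longleftrightarrow> distinct vs \<and> length vs \<ge> 3
     \<and> (\<forall>i<length vs. E (vs ! i) (vs ! ((i + 1) mod length vs)))"

definition induced_cycle :: "('a \<Rightarrow> 'a \<Rightarrow> bool) \<Rightarrow> 'a list \<Rightarrow> bool" where
  "induced_cycle E vs \<longleftrightarrow> is_cycle E vs
     \<and> (\<forall>x\<in>set vs. \<forall>y\<in>set vs. E x y \<longrightarrow> cyc_adj vs x y)"

definition graph_is_cycle :: "'a set \<Rightarrow> ('a \<Rightarrow> 'a \<Rightarrow> bool) \<Rightarrow> 'a list \<Rightarrow> bool" where
  "graph_is_cycle C F vs \<longleftrightarrow> set vs = C \<and> is_cycle F vs
     \<and> (\<forall>x\<in>C. \<forall>y\<in>C. F x y \<longleftrightarrow> cyc_adj vs x y)"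

definition independent_set :: "'a set \<Rightarrow> ('a \<Rightarrow> 'a \<Rightarrow> bool) \<Rightarrow> 'a set \<Rightarrow> bool" where
  "independent_set V E S \<longleftrightarrow> S \<subseteq> V \<and> (\<forall>x\<in>S. \<forall>y\<in>S. \<not> E x y)"

end

(* In a cubic graph the centres of a perfect star packing form a
   perfect code S: an independent set such that every other vertex has exactly one neighbour
   in S; conversely the closed neighbourhoods of a perfect code form a perfect star packing.
   Counting degrees, every vertex outside S has exactly one neighbour in S iff G - S is
   2-regular, and a finite graph is 2-regular iff its components are cycles. These cycles are
   induced in G, because a chord would be an edge of G - S. *)

theory Submission
  imports Defs
begin

lemma simple_graphD:
  assumes "simple_graph V E"
  shows "finite V" "E x y \<Longrightarrow> x \<in> V" "E x y \<Longrightarrow> y \<in> V" "symp E" "irreflp E"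
  using assms unfolding simple_graph_def symp_def irreflp_def by blast+

lemma component_self: "v \<in> W \<Longrightarrow> v \<in> component W R v"
  by (simp add: component_def)

lemma component_subset: "component W R v \<subseteq> W"
  by (auto simp: component_def)

lemma component_closed:
  "x \<in> component W R v \<Longrightarrow> y \<in> W \<Longrightarrow> R x y \<Longrightarrow> y \<in> component W R v"
  unfolding component_def by (auto intro: rtranclp.rtrancl_into_rtrancl simp: restr_def)

lemma component_subset_closed_set:
  assumes "v \<in> A" and "\<And>x y. x \<in> A \<Longrightarrow> x \<in> W \<Longrightarrow> y \<in> W \<Longrightarrow> R x y \<Longrightarrow> y \<in> A"
  shows "component W R v \<subseteq> A"
proof
  fix w assume "w \<in> component W R v"
  then have "(restr W R)\<^sup>*\<^sup>* v w" by (simp add: component_def)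
  then show "w \<in> A"
    by (induct rule: rtranclp_induct) (use assms in \<open>auto simp: restr_def\<close>)
qed

lemma component_eq:
  assumes "symp R" and "w \<in> component W R v"
  shows "component W R w = component W R v"
proof -
  have "symp (restr W R)" using \<open>symp R\<close> by (auto simp: symp_def restr_def)
  then have "symp (restr W R)\<^sup>*\<^sup>*" by (rule symp_rtranclp)
  moreover have "(restr W R)\<^sup>*\<^sup>* v w" using assms(2) by (simp add: component_def)
  ultimately show ?thesis
    unfolding component_def by (auto intro: rtranclp_trans dest: sympD)
qed

lemma neighbours_component:
  assumes "x \<in> component W R v"
  shows "neighbours W R x = neighbours (component W R v) (restr (component W R v) R) x"
  using assms component_closed[OF assms] component_subset[of W R v]
  by (auto simp: neighbours_def restr_def)

definition regular :: "nat \<Rightarrow> 'a set \<Rightarrow> ('a \<Rightarrow> 'a \<Rightarrow> bool) \<Rightarrow> bool" where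
  "regular k V E \<longleftrightarrow> (\<forall>v\<in>V. card (neighbours V E v) = k)"

lemma regular_if_components_regular:
  assumes "\<forall>C\<in>components W R. regular k C (restr C R)"
  shows "regular k W R"
  unfolding regular_def
proof
  fix x assume "x \<in> W"
  then have "component W R x \<in> components W R" "x \<in> component W R x"
    by (simp_all add: components_def component_self)
  then show "card (neighbours W R x) = k"
    using assms neighbours_component[of x W R x] by (simp add: regular_def)
qed

lemma nth_cyc_adj_iff:
  assumes "distinct vs" and "length vs \<ge> 3" and "i < length vs"
  shows "cyc_adj vs (vs ! i) y \<longleftrightarrow>
    y = vs ! ((i + 1) mod length vs) \<or> y = vs ! ((i + length vs - 1) mod length vs)"
proof -
  define n where "n = length vs"
  have i: "i < n" and n: "n \<ge> 3" using assms n_def by auto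
  have eq_nth: "vs ! i = vs ! j \<longleftrightarrow> i = j" if "j < n" for j
    using nth_eq_iff_index_eq[OF assms(1)] i that n_def by blast
  have pred: "(i = (j + 1) mod n) \<longleftrightarrow> j = (i + n - 1) mod n" if "j < n" for j
    using i that n by (cases "j + 1 < n"; cases "i = 0") (auto simp: mod_if)
  have eq_nth_succ: "vs ! i = vs ! ((j + 1) mod n) \<longleftrightarrow> j = (i + n - 1) mod n" if "j < n" for j
    using eq_nth[of "(j + 1) mod n"] pred[OF that] i by simp
  have "(i + n - 1) mod n < n" using i by simp
  then show ?thesis
    unfolding cyc_adj_def n_def[symmetric] using eq_nth eq_nth_succ i by (metis mod_less_divisor)
qed

lemma regular_cyc_adj:
  assumes "distinct vs" and "length vs \<ge> 3"
  shows "regular 2 (set vs) (cyc_adj vs)"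
  unfolding regular_def
proof
  fix x assume "x \<in> set vs"
  then obtain i where i: "i < length vs" and x: "x = vs ! i" by (metis in_set_conv_nth)
  define n where "n = length vs"
  have "0 < n" using i n_def by linarith
  then have idx: "(i + 1) mod n < n" "(i + n - 1) mod n < n" by simp_all
  have "n \<ge> 3" "i < n" using assms(2) i n_def by simp_all
  then have "(i + 1) mod n \<noteq> (i + n - 1) mod n" by (auto simp: mod_if)
  then have "vs ! ((i + 1) mod n) \<noteq> vs ! ((i + n - 1) mod n)"
    using nth_eq_iff_index_eq[OF assms(1)] idx n_def by simp
  moreover have "neighbours (set vs) (cyc_adj vs) x = {vs ! ((i + 1) mod n), vs ! ((i + n - 1) mod n)}"
    using nth_cyc_adj_iff[OF assms i] idx x n_def by (auto simp: neighbours_def)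
  ultimately show "card (neighbours (set vs) (cyc_adj vs) x) = 2" by simp
qed

lemma is_cycle_cyc_adjD:
  assumes "is_cycle R vs" and "symp R" and "cyc_adj vs x y"
  shows "R x y"
proof -
  obtain i where "i < length vs" and
    "x = vs ! i \<and> y = vs ! ((i + 1) mod length vs) \<or> y = vs ! i \<and> x = vs ! ((i + 1) mod length vs)"
    using assms(3) unfolding cyc_adj_def by blast
  then show ?thesis using assms(1,2) unfolding is_cycle_def by (auto dest: sympD)
qed

lemma cyc_adj_in_set: "cyc_adj vs x y \<Longrightarrow> y \<in> set vs"
  unfolding cyc_adj_def by (metis length_pos_if_in_set mod_less_divisor nth_mem)

lemma graph_is_cycle_regular:
  assumes "graph_is_cycle C F vs"
  shows "regular 2 C F"
proof -
  have C: "C = set vs" and F: "\<forall>x\<in>C. \<forall>y\<in>C. F x y \<longleftrightarrow> cyc_adj vs x y"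
    and "distinct vs" "length vs \<ge> 3"
    using assms unfolding graph_is_cycle_def is_cycle_def by auto
  then have "regular 2 C (cyc_adj vs)" using regular_cyc_adj by blast
  moreover have "neighbours C F x = neighbours C (cyc_adj vs) x" if "x \<in> C" for x
    using F that by (auto simp: neighbours_def)
  ultimately show ?thesis by (simp add: regular_def)
qed

lemma cycle_in_regular2_adj_iff:
  assumes "finite W" and "regular 2 W R" and "symp R" and "is_cycle R p" and "set p \<subseteq> W"
    and "x \<in> set p" and "y \<in> W"
  shows "R x y \<longleftrightarrow> cyc_adj p x y"
proof -
  have "distinct p" "length p \<ge> 3" using assms(4) by (simp_all add: is_cycle_def)
  then have "card (neighbours (set p) (cyc_adj p) x) = 2"
    using regular_cyc_adj assms(6) unfolding regular_def by blast
  moreover have "card (neighbours W R x) = 2" using assms(2,5,6) by (auto simp: regular_def)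
  moreover have "neighbours (set p) (cyc_adj p) x \<subseteq> neighbours W R x"
    using assms(3-5) is_cycle_cyc_adjD by (fastforce simp: neighbours_def)
  moreover have "finite (neighbours W R x)" using assms(1) by (simp add: neighbours_def)
  ultimately have "neighbours (set p) (cyc_adj p) x = neighbours W R x"
    by (metis card_subset_eq)
  moreover have "R x y \<longleftrightarrow> y \<in> neighbours W R x" using assms(7) by (simp add: neighbours_def)
  moreover have "cyc_adj p x y \<longleftrightarrow> y \<in> neighbours (set p) (cyc_adj p) x"
    using cyc_adj_in_set by (auto simp: neighbours_def)
  ultimately show ?thesis by simp
qed

lemma maximal_path_from:
  assumes "finite W" and "v \<in> W"
  obtains p where "p \<noteq> []" "hd p = v" "distinct p" "successively R p" "set p \<subseteq> W"
    "\<forall>y\<in>W. R (last p) y \<longrightarrow> y \<in> set p"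
proof -
  define path where
    "path p \<longleftrightarrow> p \<noteq> [] \<and> hd p = v \<and> distinct p \<and> successively R p \<and> set p \<subseteq> W" for p
  have "path [v]" using assms(2) by (simp add: path_def)
  moreover have "\<forall>p. path p \<longrightarrow> length p < card W + 1"
    using assms(1) by (metis card_mono distinct_card less_Suc_eq_le path_def Suc_eq_plus1)
  ultimately obtain p where p: "path p" and longest: "\<forall>q. path q \<longrightarrow> length q \<le> length p"
    using ex_has_greatest_nat[of path "[v]" length "card W + 1"] by blast
  have "y \<in> set p" if "y \<in> W" and "R (last p) y" for y
  proof (rule ccontr)
    assume "y \<notin> set p"
    then have "path (p @ [y])"
      using p that by (auto simp: path_def successively_append_iff)
    then show False using longest by fastforce
  qed
  then show ?thesis using that p by (auto simp: path_def)
qed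

lemma regular2_path_inner_neighbours:
  assumes "finite W" and "regular 2 W R" and "symp R" and "distinct p" and "successively R p"
    and "set p \<subseteq> W" and "0 < j" and "Suc j < length p"
  shows "neighbours W R (p ! j) = {p ! (j - 1), p ! Suc j}"
proof -
  have "R (p ! j) (p ! (j - 1))" "R (p ! j) (p ! Suc j)"
    using successively_nth[OF assms(5), of "j - 1"] successively_nth[OF assms(5), of j] assms(3,7,8)
    by (auto dest: sympD)
  moreover have "p ! (j - 1) \<in> W" "p ! Suc j \<in> W" "p ! j \<in> W" using assms(6-8) by auto
  ultimately have sub: "{p ! (j - 1), p ! Suc j} \<subseteq> neighbours W R (p ! j)"
    by (simp add: neighbours_def)
  have "p ! (j - 1) \<noteq> p ! Suc j" using assms(4,7,8) nth_eq_iff_index_eq by fastforce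
  then have "card {p ! (j - 1), p ! Suc j} = card (neighbours W R (p ! j))"
    using assms(2) \<open>p ! j \<in> W\<close> by (simp add: regular_def)
  moreover have "finite (neighbours W R (p ! j))" using assms(1) by (simp add: neighbours_def)
  ultimately show ?thesis using sub by (metis card_subset_eq)
qed

lemma is_cycle_if_successively:
  assumes "distinct p" and "length p \<ge> 3" and "successively R p" and "R (last p) (hd p)"
  shows "is_cycle R p"
  unfolding is_cycle_def
proof (intro conjI allI impI)
  fix i assume "i < length p"
  then consider "Suc i < length p" | "i + 1 = length p" by linarith
  then show "R (p ! i) (p ! ((i + 1) mod length p))"
  proof cases
    case 1
    then show ?thesis using successively_nth[OF assms(3)] by simp
  next
    case 2
    then have "p \<noteq> []" and "i = length p - 1" by auto
    then have "p ! i = last p" by (simp add: last_conv_nth)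
    then show ?thesis using 2 assms(4) \<open>p \<noteq> []\<close> by (simp add: hd_conv_nth)
  qed
qed (use assms(1,2) in simp_all)

lemma regular2_closed_path_length:
  assumes "finite W" and "regular 2 W R" and "irreflp R"
    and "p \<noteq> []" and "distinct p" and "set p \<subseteq> W"
    and closed: "\<forall>y\<in>W. R (last p) y \<longrightarrow> y \<in> set p"
  shows "length p \<ge> 3"
proof -
  have "last p \<in> W" using assms(4,6) by auto
  then have "last p \<notin> neighbours W R (last p)" "card (neighbours W R (last p)) = 2"
    using assms(2,3) by (auto simp: neighbours_def regular_def irreflp_def)
  then have "card (insert (last p) (neighbours W R (last p))) = 3"
    using assms(1) by (simp add: neighbours_def)
  moreover have "insert (last p) (neighbours W R (last p)) \<subseteq> set p"
    using closed assms(4) by (auto simp: neighbours_def)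
  ultimately show ?thesis using assms(5) by (metis card_mono distinct_card List.finite_set)
qed

lemma regular2_closed_path_last_adj_hd:
  assumes "finite W" and "regular 2 W R" and "symp R" and "irreflp R"
    and "p \<noteq> []" and "distinct p" and "successively R p" and "set p \<subseteq> W"
    and closed: "\<forall>y\<in>W. R (last p) y \<longrightarrow> y \<in> set p"
  shows "R (last p) (hd p)"
proof -
  define n where "n = length p"
  define u where "u = last p"
  have n3: "n \<ge> 3" using regular2_closed_path_length[OF assms(1,2,4,5,6,8) closed] n_def by simp
  have u: "u = p ! (n - 1)" "u \<in> W" using assms(5,8) by (auto simp: u_def n_def last_conv_nth)
  have "Suc (n - 2) = n - 1" "Suc (n - 2) < length p" "p ! (n - 2) \<in> W"
    using n3 n_def assms(8) by (simp_all add: subset_iff)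
  then have "p ! (n - 2) \<in> neighbours W R u"
    using successively_nth[OF assms(7), of "n - 2"] u assms(3) by (auto simp: neighbours_def dest: sympD)
  moreover have "card (neighbours W R u) = 2" using assms(2) u(2) by (simp add: regular_def)
  ultimately obtain w where w: "w \<in> neighbours W R u" "w \<noteq> p ! (n - 2)"
    by (metis card_2_iff insertCI)
  then obtain j where j: "j < n" "w = p ! j"
    using closed n_def by (auto simp: neighbours_def u_def in_set_conv_nth)
  \<comment> \<open>Inner path vertices already have both neighbours on the path, so the second
      neighbour of the last vertex can only be the first one.\<close>
  have "j \<noteq> n - 1" using w(1) j u assms(4) by (auto simp: neighbours_def irreflp_def)
  have "j \<noteq> n - 2" using w j by auto
  have "j = 0"
  proof (rule ccontr)
    assume "j \<noteq> 0"
    then have inner: "0 < j" "Suc j < n" using j(1) \<open>j \<noteq> n - 1\<close> by linarith+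
    have "u \<in> neighbours W R w"
      using w(1) assms(3) u(2) by (auto simp: neighbours_def dest: sympD)
    then have "u \<in> {p ! (j - 1), p ! Suc j}"
      using regular2_path_inner_neighbours[OF assms(1-3,6-8) inner(1)] inner(2) j n_def by simp
    then have "n - 1 = j - 1 \<or> n - 1 = Suc j"
      using u(1) inner assms(6) n_def by (auto simp: nth_eq_iff_index_eq)
    then show False using inner \<open>j \<noteq> n - 2\<close> by linarith
  qed
  then show ?thesis using w(1) j assms(5) by (simp add: neighbours_def u_def hd_conv_nth)
qed

lemma regular2_component_induced_cycle:
  assumes "finite W" and "symp R" and "irreflp R" and "regular 2 W R" and "v \<in> W"
  shows "\<exists>vs. graph_is_cycle (component W R v) (restr (component W R v) R) vs \<and> induced_cycle R vs"
proof -
  obtain p where p: "p \<noteq> []" "hd p = v" "distinct p" "successively R p" "set p \<subseteq> W"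
    and closed: "\<forall>y\<in>W. R (last p) y \<longrightarrow> y \<in> set p"
    using maximal_path_from[OF assms(1,5)] by blast
  have cyc: "is_cycle R p"
    using is_cycle_if_successively[OF p(3) _ p(4)] p(2)
      regular2_closed_path_length[OF assms(1,4,3) p(1,3,5) closed]
      regular2_closed_path_last_adj_hd[OF assms(1,4,2,3) p(1,3-5) closed] by blast
  have adj: "R x y \<longleftrightarrow> cyc_adj p x y" if "x \<in> set p" "y \<in> W" for x y
    using cycle_in_regular2_adj_iff[OF assms(1,4,2) cyc p(5) that] .
  have "component W R v \<subseteq> set p"
    using p(1,2) adj cyc_adj_in_set by (intro component_subset_closed_set) auto
  moreover have "p ! i \<in> component W R v" if "i < length p" for i
    using that
  proof (induction i)
    case 0
    then show ?case using p(1,2) assms(5) by (simp add: hd_conv_nth component_self)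
  next
    case (Suc i)
    then show ?case
      using successively_nth[OF p(4)] p(5) component_closed[of "p ! i" W R v "p ! Suc i"]
      by (simp add: subset_iff)
  qed
  ultimately have C: "component W R v = set p" by (auto simp: in_set_conv_nth)
  have "graph_is_cycle (set p) (restr (set p) R) p"
    using cyc adj p(1,5) unfolding graph_is_cycle_def is_cycle_def restr_def
    by (auto intro!: nth_mem)
  moreover have "induced_cycle R p" using cyc adj p(5) by (auto simp: induced_cycle_def)
  ultimately show ?thesis unfolding C by blast
qed

lemma components_induced_cycles_iff_regular2:
  assumes "finite W" and "symp R" and "irreflp R"
  shows "(\<forall>C\<in>components W R. \<exists>vs. graph_is_cycle C (restr C R) vs \<and> induced_cycle R vs)
    \<longleftrightarrow> regular 2 W R"
proof
  assume "\<forall>C\<in>components W R. \<exists>vs. graph_is_cycle C (restr C R) vs \<and> induced_cycle R vs"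
  then show "regular 2 W R" by (meson graph_is_cycle_regular regular_if_components_regular)
next
  assume "regular 2 W R"
  then show "\<forall>C\<in>components W R. \<exists>vs. graph_is_cycle C (restr C R) vs \<and> induced_cycle R vs"
    using regular2_component_induced_cycle[OF assms] by (auto simp: components_def)
qed

(* Equivalently: every closed neighbourhood meets S in exactly one vertex. *)
definition perfect_code :: "'a set \<Rightarrow> ('a \<Rightarrow> 'a \<Rightarrow> bool) \<Rightarrow> 'a set \<Rightarrow> bool" where
  "perfect_code V E S \<longleftrightarrow> independent_set V E S \<and> (\<forall>x\<in>V - S. card (neighbours S E x) = 1)"

lemma card_neighbours_Diff:
  assumes "finite V" and "S \<subseteq> V"
  shows "card (neighbours V E x) = card (neighbours (V - S) E x) + card (neighbours S E x)"
proof -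
  have "neighbours V E x = neighbours (V - S) E x \<union> neighbours S E x"
    using assms(2) by (auto simp: neighbours_def)
  moreover have "finite (neighbours S E x)" "finite (neighbours (V - S) E x)"
    using assms by (simp_all add: neighbours_def rev_finite_subset)
  ultimately show ?thesis by (simp add: card_Un_disjoint neighbours_def Int_def)
qed

lemma cubic_regular2_Diff_iff:
  assumes "finite V" and "cubic V E" and "S \<subseteq> V"
  shows "regular 2 (V - S) E \<longleftrightarrow> (\<forall>x\<in>V - S. card (neighbours S E x) = 1)"
  using assms card_neighbours_Diff[OF assms(1,3)] by (auto simp: regular_def cubic_def)

lemma is_K13_neighbours:
  assumes "is_K13 C F"
  obtains c where "c \<in> C" "card C = 4" "\<forall>y\<in>C. neighbours C F y = (if y = c then C - {c} else {c})"
proof -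
  obtain c where "card C = 4" "c \<in> C"
    and F: "\<forall>x\<in>C. \<forall>y\<in>C. F x y \<longleftrightarrow> (x = c \<and> y \<noteq> c) \<or> (y = c \<and> x \<noteq> c)"
    using assms unfolding is_K13_def by blast
  moreover have "neighbours C F y = (if y = c then C - {c} else {c})" if "y \<in> C" for y
    using that \<open>c \<in> C\<close> F by (auto simp: neighbours_def)
  ultimately show ?thesis by (intro that) auto
qed

lemma star_packing_leaf_or_centre:
  assumes "\<forall>C\<in>components V H. is_K13 C (restr C H)" and "x \<in> V"
  shows "card (neighbours V H x) = 3 \<and> (\<forall>y\<in>neighbours V H x. card (neighbours V H y) = 1)
    \<or> (\<exists>c\<in>V. neighbours V H x = {c} \<and> card (neighbours V H c) = 3)"
proof -
  define C where "C = component V H x"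
  have CV: "C \<subseteq> V" and xC: "x \<in> C"
    using assms(2) by (simp_all add: C_def component_subset component_self)
  have "is_K13 C (restr C H)" using assms xC by (auto simp: C_def components_def)
  then obtain c where c: "c \<in> C" "card C = 4"
    and nbC: "\<forall>y\<in>C. neighbours C (restr C H) y = (if y = c then C - {c} else {c})"
    by (rule is_K13_neighbours)
  have nb: "neighbours V H y = (if y = c then C - {c} else {c})" if "y \<in> C" for y
    using nbC that neighbours_component[of y V H x] by (simp add: C_def)
  have "card (C - {c}) = 3" using c by simp
  then show ?thesis using nb c CV xC by (cases "x = c") auto
qed

lemma perfect_code_if_star_packing:
  assumes "simple_graph V E" and "cubic V E" and "perfect_star_packing V E"
  shows "\<exists>S. perfect_code V E S"
proof -
  obtain H where HE: "\<And>x y. H x y \<Longrightarrow> E x y" and Hsym: "\<And>x y. H x y \<Longrightarrow> H y x"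
    and K13: "\<forall>C\<in>components V H. is_K13 C (restr C H)"
    using assms(3) unfolding perfect_star_packing_def by blast
  note leaf_or_centre = star_packing_leaf_or_centre[OF K13]
  define S where "S = {v\<in>V. card (neighbours V H v) = 3}"
  have centre: "neighbours V H c = neighbours V E c" if "c \<in> S" for c
  proof -
    have "neighbours V H c \<subseteq> neighbours V E c" using HE by (auto simp: neighbours_def)
    moreover have "card (neighbours V H c) = card (neighbours V E c)"
      using that assms(2) by (simp add: S_def cubic_def)
    moreover have "finite (neighbours V E c)"
      using simple_graphD(1)[OF assms(1)] by (simp add: neighbours_def)
    ultimately show ?thesis by (metis card_subset_eq)
  qed
  have "independent_set V E S"
    unfolding independent_set_def
  proof (intro conjI ballI notI)
    fix x y assume "x \<in> S" "y \<in> S" "E x y"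
    then have "y \<in> neighbours V H x"
      using centre simple_graphD(3)[OF assms(1)] by (auto simp: neighbours_def)
    then show False using leaf_or_centre \<open>x \<in> S\<close> \<open>y \<in> S\<close> by (fastforce simp: S_def)
  qed (auto simp: S_def)
  moreover have "neighbours S E x = {c}" if "x \<in> V - S" "neighbours V H x = {c}" "c \<in> S" for x c
  proof -
    have "c \<in> neighbours S E x" using that HE by (auto simp: neighbours_def)
    moreover have "y = c" if "y \<in> neighbours S E x" for y
    proof -
      have "H y x" using that centre[of y] \<open>x \<in> V - S\<close> simple_graphD(4)[OF assms(1)]
        by (auto simp: neighbours_def dest: sympD)
      moreover have "y \<in> V" using that by (simp add: neighbours_def S_def)
      ultimately show ?thesis using \<open>neighbours V H x = {c}\<close> Hsym
        by (auto simp: neighbours_def)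
    qed
    ultimately show ?thesis by blast
  qed
  then have "\<forall>x\<in>V - S. card (neighbours S E x) = 1"
    using leaf_or_centre by (fastforce simp: S_def)
  ultimately show ?thesis unfolding perfect_code_def by blast
qed


definition star_edges :: "'a set \<Rightarrow> ('a \<Rightarrow> 'a \<Rightarrow> bool) \<Rightarrow> 'a \<Rightarrow> 'a \<Rightarrow> bool" where
  "star_edges S E x y \<longleftrightarrow> E x y \<and> (x \<in> S \<or> y \<in> S)"

lemma component_star_edges:
  assumes "simple_graph V E" and "perfect_code V E S" and "c \<in> S"
  shows "component V (star_edges S E) c = insert c (neighbours V E c)"
proof
  have SV: "S \<subseteq> V" and indep: "\<And>x y. x \<in> S \<Longrightarrow> y \<in> S \<Longrightarrow> \<not> E x y"
    and unique: "\<And>x. x \<in> V - S \<Longrightarrow> card (neighbours S E x) = 1"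
    using assms(2) by (auto simp: perfect_code_def independent_set_def)
  have cV: "c \<in> V" using SV assms(3) by blast
  show "component V (star_edges S E) c \<subseteq> insert c (neighbours V E c)"
  proof (rule component_subset_closed_set)
    fix x y assume x: "x \<in> insert c (neighbours V E c)" and "x \<in> V" "y \<in> V"
      and xy: "star_edges S E x y"
    show "y \<in> insert c (neighbours V E c)"
    proof (cases "x = c")
      case True
      then show ?thesis using xy \<open>y \<in> V\<close> by (simp add: star_edges_def neighbours_def)
    next
      case False
      then have "E c x" using x by (simp add: neighbours_def)
      then have "x \<in> V - S" using indep assms(3) \<open>x \<in> V\<close> by blast
      then have "y \<in> neighbours S E x" using xy by (auto simp: star_edges_def neighbours_def)
      moreover have "c \<in> neighbours S E x"
        using \<open>E c x\<close> assms(3) simple_graphD(4)[OF assms(1)] by (auto simp: neighbours_def dest: sympD)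
      moreover obtain z where "neighbours S E x = {z}"
        using unique[OF \<open>x \<in> V - S\<close>] by (auto simp: card_1_singleton_iff)
      ultimately show ?thesis by simp
    qed
  qed simp
  show "insert c (neighbours V E c) \<subseteq> component V (star_edges S E) c"
    using component_self[OF cV] component_closed[of c V "star_edges S E" c] assms(3)
    by (auto simp: neighbours_def star_edges_def)
qed

lemma is_K13_star_edges:
  assumes "simple_graph V E" and "cubic V E" and "independent_set V E S" and "c \<in> S"
  shows "is_K13 (insert c (neighbours V E c)) (restr (insert c (neighbours V E c)) (star_edges S E))"
proof -
  define N where "N = insert c (neighbours V E c)"
  have "c \<in> V" and "c \<notin> neighbours V E c"
    using assms(3,4) simple_graphD(5)[OF assms(1)] by (auto simp: independent_set_def neighbours_def irreflp_def)
  then have "card N = 4"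
    using assms(2) simple_graphD(1)[OF assms(1)] by (simp add: N_def cubic_def neighbours_def)
  moreover have in_S: "x \<in> S \<longleftrightarrow> x = c" if "x \<in> N" for x
    using that assms(3,4) by (auto simp: N_def independent_set_def neighbours_def)
  moreover have "E x y \<longleftrightarrow> x \<noteq> y" if "x \<in> N" "y \<in> N" "x = c \<or> y = c" for x y
    using that simple_graphD(4,5)[OF assms(1)] by (auto simp: N_def neighbours_def irreflp_def dest: sympD)
  ultimately have "card N = 4 \<and> (\<forall>x\<in>N. \<forall>y\<in>N. restr N (star_edges S E) x y \<longleftrightarrow> (x = c \<and> y \<noteq> c) \<or> (y = c \<and> x \<noteq> c))"
    by (auto simp: restr_def star_edges_def)
  then show ?thesis unfolding is_K13_def N_def by blast
qed

lemma star_packing_if_perfect_code: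
  assumes "simple_graph V E" and "cubic V E" and "perfect_code V E S"
  shows "perfect_star_packing V E"
  unfolding perfect_star_packing_def
proof (intro exI conjI allI impI ballI)
  let ?H = "star_edges S E"
  have "symp ?H" using simple_graphD(4)[OF assms(1)] by (auto simp: symp_def star_edges_def)
  then show "?H y x" if "?H x y" for x y using that by (rule sympD)
  show "E x y" if "?H x y" for x y using that by (simp add: star_edges_def)
  fix C assume "C \<in> components V ?H"
  then obtain v where v: "v \<in> V" and C: "C = component V ?H v" by (auto simp: components_def)
  have "\<exists>c\<in>S. v \<in> component V ?H c"
  proof (cases "v \<in> S")
    case True
    then show ?thesis using component_self[OF v] by blast
  next
    case False
    then obtain c where "neighbours S E v = {c}"
      using assms(3) v by (auto simp: perfect_code_def card_1_singleton_iff)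
    then have "c \<in> S" "v \<in> neighbours V E c"
      using v simple_graphD(4)[OF assms(1)] by (auto simp: neighbours_def dest: sympD)
    then show ?thesis using component_star_edges[OF assms(1,3)] by blast
  qed
  then obtain c where "c \<in> S" and "C = component V ?H c"
    using C component_eq[OF \<open>symp ?H\<close>] by metis
  then show "is_K13 C (restr C ?H)"
    using component_star_edges[OF assms(1,3)] is_K13_star_edges[OF assms(1,2)] assms(3)
    by (simp add: perfect_code_def)
qed


theorem mainTheorem3:
  fixes V :: "'a set" and E :: "'a \<Rightarrow> 'a \<Rightarrow> bool"
  assumes "fullerene V E"
  shows "perfect_star_packing V E \<longleftrightarrow>
    (\<exists>S. independent_set V E S \<and>
       (\<forall>C\<in>components (V - S) E.
          \<exists>vs. graph_is_cycle C (restr C E) vs \<and> induced_cycle E vs))"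
proof -
  have simple: "simple_graph V E" and cubic: "cubic V E"
    using assms by (simp_all add: fullerene_def)
  note G = simple_graphD[OF simple]
  have "perfect_star_packing V E \<longleftrightarrow> (\<exists>S. perfect_code V E S)"
    using perfect_code_if_star_packing[OF simple cubic] star_packing_if_perfect_code[OF simple cubic]
    by blast
  also have "\<dots> \<longleftrightarrow> (\<exists>S. independent_set V E S \<and> regular 2 (V - S) E)"
    using cubic_regular2_Diff_iff[OF G(1) cubic] by (auto simp: perfect_code_def independent_set_def)
  also have "\<dots> \<longleftrightarrow> (\<exists>S. independent_set V E S \<and>
       (\<forall>C\<in>components (V - S) E. \<exists>vs. graph_is_cycle C (restr C E) vs \<and> induced_cycle E vs))"
    using components_induced_cycles_iff_regular2[OF finite_Diff[OF G(1)] G(4,5)] by simp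
  finally show ?thesis .
qed

end
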